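(* Consider the client selection problem and the COCS policy described in the context, run with input parameters $K(t)=t^{z}\log(t)$ and $h_T=\lceil T^{\gamma}\rceil$, where $0<z<1$ and $0<\gamma<\frac12$. Then the expected regret incurred in exploration rounds satisfies $$\mathbb{E}[R_{\text{explore}}(T)]\le \frac{4N^2MB}{c^{\min}}\left(T^{z+2\gamma}\log(T)+T^{2\gamma}\right),$$ where $c^{\min}=\min_{n,t}c_n(y_n^t)$.
   Context: Setting. There are $N$ clients indexed by $\mathcal N=\{1,\dots,N\}$, $M$ edge servers (ESs) indexed by $\mathcal M=\{1,\dots,M\}$, and rounds $t=1,\dots,T$. In round $t$, ES $m$ can communicate with a set $\mathcal N_m^t\subseteq\mathcal N$ of clients (these sets may overlap). Each client $n$ reveals computation resources $y_n^t$ and charges a cost $c_n(y_n^t)>0$, with $c_n$ nondecreasing; $c^{\min}=\min_{n,t}c_n(y_n^t)$. Each ES has budget $B>0$. A feasible client selection decision in round $t$ is $\bm s^t=(\bm s_1^t,\dots,\bm s_M^t)$ with $\bm s_m^t\subseteq\mathcal N_m^t$, $\sum_{n\in\bm s_m^t}c_n(y_n^t)\le B$ for every $m$, and $\bm s_m^t\cap\bm s_{m'}^t=\emptyset$ for $m\neq m'$. Each client-ES pair $(n,m)$ with $n\in\mathcal N_m^t$ has an observed context $\phi_{n,m}^t\in\Phi=[0,1]^2$. If client $n$ is selected by ES $m$ in round $t$, its participation indicator $X_{n,m}^t\in\{0,1\}$ is Bernoulli with mean $p_{n,m}(\phi_{n,m}^t)$, where $p_{n,m}:\Phi\to[0,1]$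 is unknown. The utility is $\mu(\bm s^t;\bm X^t)=\frac1M\sum_{m\in\mathcal M}\sum_{n\in\bm s_m^t}X_{n,m}^t$ (and $\mu(\bm s;\bm p^t)$ is the same expression with $p_{n,m}(\phi^t_{n,m})$ in place of $X^t_{n,m}$). The oracle decision $\bm s^{\mathrm{opt},t}$ maximizes $\mu(\bm s;\bm p^t)$ over feasible decisions. The expected regret of a policy choosing $\bm s^1,\dots,\bm s^T$ is $\mathbb E[R(T)]=\sum_{t=1}^T(\mathbb E[\mu(\bm s^{\mathrm{opt},t};\bm X^t)]-\mathbb E[\mu(\bm s^t;\bm X^t)])$. COCS policy (inputs: increasing function $K$, integer $h_T$). Partition $\Phi$ into $h_T^2$ squares of side $1/h_T$. For each pair $(n,m)$ and square $l$ keep a counter $C_{n,m}(l)$ (initially $0$) and an estimate $\hat p_{n,m}(l)$ equal to the sample mean of the indicators observed when $n$ was selected by $m$ with context in $l$ (initially $0$). In round $t$: observe all contexts, let $l^t_{n,m}$ be the square containing $\phi^t_{n,m}$ and set $\hat X^t_{n,m}=\hat p_{n,m}(l^t_{n,m})$; a pair is under-explored if $C_{n,m}(l^t_{n,m})\le K(t)$. If an under-explored pair exists (exploration round), select a feasible decision that first maximizes the number of selected under-explored clients and then spends the remaining per-ES budget on explored clients so as to maximize $\mu(\cdot;\hat{\bm X}^t)$ (when every ES has under-explored clients, simply a feasible decision of maximum cardinality). Otherwise (exploitation round), select a feasible $\bm s^t$ maximizing $\mu(\bm s;\hat{\bm X}^t)$. At the end of the round, for each selected pair observe $X^t_{n,m}$,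 update $\hat p_{n,m}(l^t_{n,m})$ as a running mean and increment $C_{n,m}(l^t_{n,m})$. $R_{\text{explore}}(T)$ and $R_{\text{exploit}}(T)$ denote the parts of the regret summed over exploration rounds and over exploitation rounds respectively, so $R(T)=R_{\text{explore}}(T)+R_{\text{exploit}}(T)$. *)

theory Defs
  imports "HOL-Probability.Probability"
begin

text \<open>Clients are 1..N, edge servers 1..M, rounds 1..T.
  A decision is a function from ES index m to the set of clients it selects.
  Nav m is the set of clients ES m can reach in the round; cst n = c_n(y_n^t).\<close>

definition feasible :: "nat \<Rightarrow> (nat \<Rightarrow> nat set) \<Rightarrow> (nat \<Rightarrow> real) \<Rightarrow> real \<Rightarrow> (nat \<Rightarrow> nat set) \<Rightarrow> bool" where
  "feasible M Nav cst B sm \<longleftrightarrow>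
     (\<forall>m\<in>{1..M}. sm m \<subseteq> Nav m \<and> (\<Sum>n\<in>sm m. cst n) \<le> B) \<and>
     (\<forall>m\<in>{1..M}. \<forall>m'\<in>{1..M}. m \<noteq> m' \<longrightarrow> sm m \<inter> sm m' = {})"

definition util :: "nat \<Rightarrow> (nat \<Rightarrow> nat set) \<Rightarrow> (nat \<Rightarrow> nat \<Rightarrow> real) \<Rightarrow> real" where
  "util M sm v = (1 / real M) * (\<Sum>m\<in>{1..M}. \<Sum>n\<in>sm m. v n m)"

definition K_fun :: "real \<Rightarrow> nat \<Rightarrow> real" where
  "K_fun z t = real t powr z * ln (real t)"

definition h_fun :: "real \<Rightarrow> nat \<Rightarrow> nat" where
  "h_fun \<gamma> T = nat \<lceil>real T powr \<gamma>\<rceil>"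

text \<open>Square of side 1/h containing a context in [0,1]^2 (squares indexed by
  {0..h-1}^2; points on the right/top boundary belong to the last square).\<close>
definition cell :: "nat \<Rightarrow> real \<times> real \<Rightarrow> nat \<times> nat" where
  "cell h x = (min (h - 1) (nat \<lfloor>fst x * real h\<rfloor>), min (h - 1) (nat \<lfloor>snd x * real h\<rfloor>))"

text \<open>History quantities of COCS before round t, given decisions s (round, outcome, ES)
  and contexts phi (round, client, ES).\<close>
definition obs_rounds :: "nat \<Rightarrow> (nat \<Rightarrow> nat \<Rightarrow> nat \<Rightarrow> real \<times> real) \<Rightarrow> (nat \<Rightarrow> 'w \<Rightarrow> nat \<Rightarrow> nat set)
     \<Rightarrow> 'w \<Rightarrow> nat \<Rightarrow> nat \<Rightarrow> nat \<Rightarrow> nat \<times> nat \<Rightarrow> nat set" where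
  "obs_rounds h \<phi> s \<omega> t n m l = {\<tau>\<in>{1..<t}. n \<in> s \<tau> \<omega> m \<and> cell h (\<phi> \<tau> n m) = l}"

definition counter :: "nat \<Rightarrow> (nat \<Rightarrow> nat \<Rightarrow> nat \<Rightarrow> real \<times> real) \<Rightarrow> (nat \<Rightarrow> 'w \<Rightarrow> nat \<Rightarrow> nat set)
     \<Rightarrow> 'w \<Rightarrow> nat \<Rightarrow> nat \<Rightarrow> nat \<Rightarrow> nat \<times> nat \<Rightarrow> nat" where
  "counter h \<phi> s \<omega> t n m l = card (obs_rounds h \<phi> s \<omega> t n m l)"

definition phat :: "nat \<Rightarrow> (nat \<Rightarrow> nat \<Rightarrow> nat \<Rightarrow> real \<times> real) \<Rightarrow> (nat \<Rightarrow> 'w \<Rightarrow> nat \<Rightarrow> nat set)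
     \<Rightarrow> (nat \<Rightarrow> nat \<Rightarrow> nat \<Rightarrow> 'w \<Rightarrow> bool) \<Rightarrow> 'w \<Rightarrow> nat \<Rightarrow> nat \<Rightarrow> nat \<Rightarrow> nat \<times> nat \<Rightarrow> real" where
  "phat h \<phi> s X \<omega> t n m l =
     (if counter h \<phi> s \<omega> t n m l = 0 then 0
      else (\<Sum>\<tau>\<in>obs_rounds h \<phi> s \<omega> t n m l. of_bool (X \<tau> n m \<omega>)) / real (counter h \<phi> s \<omega> t n m l))"

definition under_explored :: "real \<Rightarrow> nat \<Rightarrow> (nat \<Rightarrow> nat \<Rightarrow> nat set) \<Rightarrow> (nat \<Rightarrow> nat \<Rightarrow> nat \<Rightarrow> real \<times> real)
     \<Rightarrow> (nat \<Rightarrow> 'w \<Rightarrow> nat \<Rightarrow> nat set) \<Rightarrow> 'w \<Rightarrow> nat \<Rightarrow> nat \<Rightarrow> nat \<Rightarrow> bool" where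
  "under_explored z h Nav \<phi> s \<omega> t n m \<longleftrightarrow>
     n \<in> Nav t m \<and> real (counter h \<phi> s \<omega> t n m (cell h (\<phi> t n m))) \<le> K_fun z t"

definition exploration_round :: "real \<Rightarrow> nat \<Rightarrow> nat \<Rightarrow> (nat \<Rightarrow> nat \<Rightarrow> nat set) \<Rightarrow> (nat \<Rightarrow> nat \<Rightarrow> nat \<Rightarrow> real \<times> real)
     \<Rightarrow> (nat \<Rightarrow> 'w \<Rightarrow> nat \<Rightarrow> nat set) \<Rightarrow> 'w \<Rightarrow> nat \<Rightarrow> bool" where
  "exploration_round z h M Nav \<phi> s \<omega> t \<longleftrightarrow>
     (\<exists>m\<in>{1..M}. \<exists>n\<in>Nav t m. under_explored z h Nav \<phi> s \<omega> t n m)"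

text \<open>Selection rule of COCS in one round. UE n m: pair (n,m) under-explored;
  Xh n m: current estimate hat X.\<close>
definition cocs_choice :: "nat \<Rightarrow> (nat \<Rightarrow> nat set) \<Rightarrow> (nat \<Rightarrow> real) \<Rightarrow> real \<Rightarrow> (nat \<Rightarrow> nat \<Rightarrow> bool)
     \<Rightarrow> (nat \<Rightarrow> nat \<Rightarrow> real) \<Rightarrow> (nat \<Rightarrow> nat set) \<Rightarrow> bool" where
  "cocs_choice M Nav cst B UE Xh sm \<longleftrightarrow>
    (if (\<exists>m\<in>{1..M}. \<exists>n\<in>Nav m. UE n m) then
       (if (\<forall>m\<in>{1..M}. \<exists>n\<in>Nav m. UE n m) then
          feasible M Nav cst B sm \<and> (\<forall>m\<in>{1..M}. \<forall>n\<in>sm m. UE n m) \<and>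
          (\<forall>s'. feasible M Nav cst B s' \<and> (\<forall>m\<in>{1..M}. \<forall>n\<in>s' m. UE n m) \<longrightarrow>
              (\<Sum>m\<in>{1..M}. card (s' m)) \<le> (\<Sum>m\<in>{1..M}. card (sm m)))
        else
          feasible M Nav cst B sm \<and>
          (\<forall>s'. feasible M Nav cst B s' \<longrightarrow>
              (\<Sum>m\<in>{1..M}. card {n\<in>s' m. UE n m}) \<le> (\<Sum>m\<in>{1..M}. card {n\<in>sm m. UE n m})) \<and>
          (\<forall>s'. feasible M Nav cst B s' \<and> (\<forall>m\<in>{1..M}. {n\<in>s' m. UE n m} = {n\<in>sm m. UE n m}) \<longrightarrow>
              util M s' Xh \<le> util M sm Xh))
     else
       feasible M Nav cst B sm \<and> (\<forall>s'. feasible M Nav cst B s' \<longrightarrow> util M s' Xh \<le> util M sm Xh))"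

definition R_explore :: "real \<Rightarrow> nat \<Rightarrow> nat \<Rightarrow> (nat \<Rightarrow> nat \<Rightarrow> nat set) \<Rightarrow> (nat \<Rightarrow> nat \<Rightarrow> nat \<Rightarrow> real \<times> real)
     \<Rightarrow> (nat \<Rightarrow> 'w \<Rightarrow> nat \<Rightarrow> nat set) \<Rightarrow> (nat \<Rightarrow> nat \<Rightarrow> nat set) \<Rightarrow> (nat \<Rightarrow> nat \<Rightarrow> nat \<Rightarrow> 'w \<Rightarrow> bool)
     \<Rightarrow> nat \<Rightarrow> 'w \<Rightarrow> real" where
  "R_explore z h M Nav \<phi> s sopt X T \<omega> =
     (\<Sum>t\<in>{1..T}. if exploration_round z h M Nav \<phi> s \<omega> t
        then util M (sopt t) (\<lambda>n m. of_bool (X t n m \<omega>)) - util M (s t \<omega>) (\<lambda>n m. of_bool (X t n m \<omega>))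
        else 0)"

definition c_min :: "nat \<Rightarrow> nat \<Rightarrow> (nat \<Rightarrow> real \<Rightarrow> real) \<Rightarrow> (nat \<Rightarrow> nat \<Rightarrow> real) \<Rightarrow> real" where
  "c_min N T c y = Min {c n (y n t) | n t. n \<in> {1..N} \<and> t \<in> {1..T}}"

end

theory Submission
  imports Defs
begin

text \<open>The bound is pathwise. In an exploration round some pair (n, m) is under-explored,
  and since a single client fits into the budget, COCS selects at least one under-explored
  pair. Charge the round to that pair and the square of its context: each charge increments
  the counter of that (pair, square), and a round can only be charged while the counter is at
  most K(T), so every (pair, square) is charged at most K(T) + 1 times. Hence there are at
  most N M h_T^2 (K(T) + 1) exploration rounds, each with regret at most N, and
  h_T^2 \<le> 4 T^(2 gamma). The factor B / c_min is at least 1.\<close>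

lemma cocs_choice_selects_under_explored:
  assumes choice: "cocs_choice M Nav cst B UE Xh sm"
    and m: "m \<in> {1..M}" and n: "n \<in> Nav m" and UE: "UE n m"
    and cost: "cst n \<le> B" and "0 \<le> B"
  shows "\<exists>m\<in>{1..M}. \<exists>n\<in>sm m. UE n m"
proof (rule ccontr)
  assume none: "\<not> ?thesis"
  define single where "single = (\<lambda>m'. if m' = m then {n} else {})"
  have single_feasible: "feasible M Nav cst B single"
    using n cost \<open>0 \<le> B\<close> by (auto simp: feasible_def single_def)
  have single_UE: "\<forall>m'\<in>{1..M}. \<forall>x\<in>single m'. UE x m'"
    using UE by (simp add: single_def)
  have "{x. x = n \<and> UE x m} = {n}"
    using UE by blast
  then have count_single: "(\<Sum>m'\<in>{1..M}. card {x\<in>single m'. UE x m'}) = 1"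
    using m by (simp add: single_def if_distrib[of card] if_distrib[of "\<lambda>A. {x\<in>A. UE x _}"]
        cong: if_cong)
  have "(\<Sum>m'\<in>{1..M}. card {x\<in>single m'. UE x m'}) \<le> (\<Sum>m'\<in>{1..M}. card {x\<in>sm m'. UE x m'})"
  proof (cases "\<forall>m'\<in>{1..M}. \<exists>x\<in>Nav m'. UE x m'")
    case True
    have count_all: "(\<Sum>m'\<in>{1..M}. card {x\<in>A m'. UE x m'}) = (\<Sum>m'\<in>{1..M}. card (A m'))"
      if "\<forall>m'\<in>{1..M}. \<forall>x\<in>A m'. UE x m'" for A
      using that by (intro sum.cong refl arg_cong[of _ _ card]) auto
    from True choice m n UE single_feasible single_UE
    have sm_UE: "\<forall>m'\<in>{1..M}. \<forall>x\<in>sm m'. UE x m'"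
      and card_le: "(\<Sum>m'\<in>{1..M}. card (single m')) \<le> (\<Sum>m'\<in>{1..M}. card (sm m'))"
      unfolding cocs_choice_def by (auto split: if_splits)
    then show ?thesis
      using count_all[OF single_UE] count_all[OF sm_UE] by linarith
  next
    case False
    with choice m n UE single_feasible show ?thesis
      unfolding cocs_choice_def by (auto split: if_splits)
  qed
  moreover have "{x\<in>sm m'. UE x m'} = {}" if "m' \<in> {1..M}" for m'
    using none that by blast
  ultimately show False
    using count_single by simp
qed

lemma card_selections_with_counter_le:
  fixes k :: real
  assumes S: "S \<subseteq> {1..T}" and "0 \<le> k"
    and selected: "\<And>t. t \<in> S \<Longrightarrow> n \<in> s t \<omega> m \<and> cell h (\<phi> t n m) = l"
    and counter: "\<And>t. t \<in> S \<Longrightarrow> real (counter h \<phi> s \<omega> t n m l) \<le> k"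
  shows "real (card S) \<le> k + 1"
proof (cases "S = {}")
  case True
  then show ?thesis using \<open>0 \<le> k\<close> by simp
next
  case False
  have "finite S" using S finite_subset by blast
  define t\<^sub>0 where "t\<^sub>0 = Max S"
  have t\<^sub>0: "t\<^sub>0 \<in> S" using \<open>finite S\<close> False by (simp add: t\<^sub>0_def)
  have "S - {t\<^sub>0} \<subseteq> obs_rounds h \<phi> s \<omega> t\<^sub>0 n m l"
  proof
    fix t assume t: "t \<in> S - {t\<^sub>0}"
    then have "t < t\<^sub>0"
      using Max_ge[OF \<open>finite S\<close>, of t] by (auto simp: t\<^sub>0_def)
    then show "t \<in> obs_rounds h \<phi> s \<omega> t\<^sub>0 n m l"
      using t S selected by (auto simp: obs_rounds_def)
  qed
  then have "card (S - {t\<^sub>0}) \<le> counter h \<phi> s \<omega> t\<^sub>0 n m l"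
    unfolding counter_def by (rule card_mono[rotated]) (simp add: obs_rounds_def)
  moreover have "card S = Suc (card (S - {t\<^sub>0}))"
    using \<open>finite S\<close> t\<^sub>0 by (rule card.remove)
  ultimately show ?thesis
    using counter[OF t\<^sub>0] by linarith
qed

lemma card_le_card_times_fibre_bound:
  fixes b :: real
  assumes "finite E" "finite A" "f ` E \<subseteq> A"
    and fibre: "\<And>a. a \<in> A \<Longrightarrow> real (card {x\<in>E. f x = a}) \<le> b"
  shows "real (card E) \<le> real (card A) * b"
proof -
  have "E = (\<Union>a\<in>A. {x\<in>E. f x = a})"
    using \<open>f ` E \<subseteq> A\<close> by blast
  then have "card E \<le> (\<Sum>a\<in>A. card {x\<in>E. f x = a})"
    using card_UN_le[OF \<open>finite A\<close>] by metis
  then have "real (card E) \<le> (\<Sum>a\<in>A. real (card {x\<in>E. f x = a}))"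
    by (metis of_nat_le_iff of_nat_sum)
  also have "\<dots> \<le> (\<Sum>a\<in>A. b)"
    by (intro sum_mono fibre)
  finally show ?thesis by simp
qed

lemma cell_in_grid:
  assumes "1 \<le> h"
  shows "cell h x \<in> {..<h} \<times> {..<h}"
  using assms by (auto simp: cell_def)

lemma K_fun_nonneg: "0 \<le> K_fun z t"
  unfolding K_fun_def by (cases "t = 0") auto

lemma K_fun_mono:
  assumes "0 \<le> z" "1 \<le> a" "a \<le> b"
  shows "K_fun z a \<le> K_fun z b"
  unfolding K_fun_def using assms by (intro mult_mono powr_mono2) auto

lemma card_exploration_rounds_le:
  assumes "0 \<le> z" and h: "1 \<le> h" and Nav: "\<And>t m. Nav t m \<subseteq> {1..N}"
    and selects: "\<And>t. t \<in> {1..T} \<Longrightarrow> exploration_round z h M Nav \<phi> s \<omega> t \<Longrightarrow>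
                    \<exists>m\<in>{1..M}. \<exists>n\<in>s t \<omega> m. under_explored z h Nav \<phi> s \<omega> t n m"
  shows "real (card {t\<in>{1..T}. exploration_round z h M Nav \<phi> s \<omega> t})
           \<le> real (N * M * h\<^sup>2) * (K_fun z T + 1)"
proof -
  define E where "E = {t\<in>{1..T}. exploration_round z h M Nav \<phi> s \<omega> t}"
  define A where "A = {1..N} \<times> {1..M} \<times> ({..<h} \<times> {..<h})"
  have "\<forall>t\<in>E. \<exists>m n. m \<in> {1..M} \<and> n \<in> s t \<omega> m \<and> under_explored z h Nav \<phi> s \<omega> t n m"
    using selects unfolding E_def by blast
  then obtain m' n' where sel: "\<And>t. t \<in> E \<Longrightarrow>
      m' t \<in> {1..M} \<and> n' t \<in> s t \<omega> (m' t) \<and> under_explored z h Nav \<phi> s \<omega> t (n' t) (m' t)"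
    by metis
  define charge where "charge t = (n' t, m' t, cell h (\<phi> t (n' t) (m' t)))" for t
  have "charge ` E \<subseteq> A"
  proof (rule image_subsetI)
    fix t assume "t \<in> E"
    with sel have "n' t \<in> Nav t (m' t)" and "m' t \<in> {1..M}"
      by (auto simp: under_explored_def)
    with Nav have "n' t \<in> {1..N}"
      by blast
    with \<open>m' t \<in> {1..M}\<close> show "charge t \<in> A"
      using cell_in_grid[OF h] by (simp add: charge_def A_def)
  qed
  moreover have "real (card {t\<in>E. charge t = a}) \<le> K_fun z T + 1" if "a \<in> A" for a
  proof -
    obtain n m l where a: "a = (n, m, l)" by (cases a)
    show ?thesis unfolding a
    proof (rule card_selections_with_counter_le[where T = T])
      fix t assume "t \<in> {t\<in>E. charge t = (n, m, l)}"
      then have t: "t \<in> E" and "n' t = n" "m' t = m" "cell h (\<phi> t n m) = l"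
        by (auto simp: charge_def)
      with sel[OF t] show "n \<in> s t \<omega> m \<and> cell h (\<phi> t n m) = l"
        by simp
      have "real (counter h \<phi> s \<omega> t n m l) \<le> K_fun z t"
        using sel[OF t] \<open>n' t = n\<close> \<open>m' t = m\<close> \<open>cell h (\<phi> t n m) = l\<close>
        by (simp add: under_explored_def)
      also have "\<dots> \<le> K_fun z T"
        using t \<open>0 \<le> z\<close> by (intro K_fun_mono) (auto simp: E_def)
      finally show "real (counter h \<phi> s \<omega> t n m l) \<le> K_fun z T" .
    qed (auto simp: E_def K_fun_nonneg)
  qed
  ultimately have "real (card E) \<le> real (card A) * (K_fun z T + 1)"
    by (intro card_le_card_times_fibre_bound) (simp_all add: E_def A_def)
  then show ?thesis
    by (simp add: E_def A_def card_cartesian_product power2_eq_square)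
qed

lemma util_nonneg:
  assumes "\<And>n m. 0 \<le> v n m"
  shows "0 \<le> util M sm v"
  unfolding util_def using assms by (intro mult_nonneg_nonneg sum_nonneg) auto

lemma util_le_card:
  assumes "\<And>m. m \<in> {1..M} \<Longrightarrow> sm m \<subseteq> {1..N}" and "\<And>n m. v n m \<le> 1"
  shows "util M sm v \<le> real N"
proof -
  have "(\<Sum>n\<in>sm m. v n m) \<le> real N" if "m \<in> {1..M}" for m
  proof -
    have "(\<Sum>n\<in>sm m. v n m) \<le> real (card (sm m))"
      using sum_mono[of "sm m" "\<lambda>n. v n m" "\<lambda>_. 1"] assms(2) by simp
    also have "\<dots> \<le> real N"
      using card_mono[OF _ assms(1)[OF that]] by simp
    finally show ?thesis .
  qed
  then have "(\<Sum>m\<in>{1..M}. \<Sum>n\<in>sm m. v n m) \<le> real M * real N"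
    using sum_mono[of "{1..M}" _ "\<lambda>_. real N"] by simp
  then show ?thesis
    unfolding util_def by (cases "M = 0") (simp_all add: field_simps)
qed

lemma R_explore_le_card_exploration_rounds:
  assumes "\<And>t m. t \<in> {1..T} \<Longrightarrow> m \<in> {1..M} \<Longrightarrow> sopt t m \<subseteq> {1..N}"
  shows "R_explore z h M Nav \<phi> s sopt X T \<omega>
           \<le> real N * real (card {t\<in>{1..T}. exploration_round z h M Nav \<phi> s \<omega> t})"
proof -
  have "R_explore z h M Nav \<phi> s sopt X T \<omega>
          \<le> (\<Sum>t\<in>{1..T}. if exploration_round z h M Nav \<phi> s \<omega> t then real N else 0)"
    unfolding R_explore_def
  proof (intro sum_mono)
    fix t assume "t \<in> {1..T}"
    then have "util M (sopt t) (\<lambda>n m. of_bool (X t n m \<omega>)) \<le> real N"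
      using assms by (intro util_le_card) auto
    moreover have "0 \<le> util M (s t \<omega>) (\<lambda>n m. of_bool (X t n m \<omega>))"
      by (intro util_nonneg) simp
    ultimately show "(if exploration_round z h M Nav \<phi> s \<omega> t
        then util M (sopt t) (\<lambda>n m. of_bool (X t n m \<omega>)) - util M (s t \<omega>) (\<lambda>n m. of_bool (X t n m \<omega>))
        else 0) \<le> (if exploration_round z h M Nav \<phi> s \<omega> t then real N else 0)"
      by simp
  qed
  also have "\<dots> = real N * real (card {t\<in>{1..T}. exploration_round z h M Nav \<phi> s \<omega> t})"
    by (simp flip: sum.inter_filter)
  finally show ?thesis .
qed

lemma R_explore_le:
  assumes "0 \<le> z" "1 \<le> h" "0 \<le> B"
    and Nav: "\<And>t m. Nav t m \<subseteq> {1..N}"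
    and cost: "\<And>t n. n \<in> {1..N} \<Longrightarrow> cst t n \<le> B"
    and sopt: "\<And>t m. t \<in> {1..T} \<Longrightarrow> m \<in> {1..M} \<Longrightarrow> sopt t m \<subseteq> {1..N}"
    and choice: "\<And>t. t \<in> {1..T} \<Longrightarrow>
                   cocs_choice M (Nav t) (cst t) B (under_explored z h Nav \<phi> s \<omega> t) (Xh t) (s t \<omega>)"
  shows "R_explore z h M Nav \<phi> s sopt X T \<omega> \<le> real N ^ 2 * real M * real (h\<^sup>2) * (K_fun z T + 1)"
proof -
  have rounds: "real (card {t\<in>{1..T}. exploration_round z h M Nav \<phi> s \<omega> t})
                  \<le> real (N * M * h\<^sup>2) * (K_fun z T + 1)"
  proof (rule card_exploration_rounds_le)
    fix t assume t: "t \<in> {1..T}" and "exploration_round z h M Nav \<phi> s \<omega> t"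
    then obtain m n where "m \<in> {1..M}" "n \<in> Nav t m" "under_explored z h Nav \<phi> s \<omega> t n m"
      unfolding exploration_round_def by blast
    moreover have "cst t n \<le> B"
      using \<open>n \<in> Nav t m\<close> Nav cost by blast
    ultimately show "\<exists>m\<in>{1..M}. \<exists>n\<in>s t \<omega> m. under_explored z h Nav \<phi> s \<omega> t n m"
      using choice[OF t] \<open>0 \<le> B\<close> by (intro cocs_choice_selects_under_explored) auto
  qed (use assms in auto)
  have "R_explore z h M Nav \<phi> s sopt X T \<omega>
          \<le> real N * real (card {t\<in>{1..T}. exploration_round z h M Nav \<phi> s \<omega> t})"
    using sopt by (rule R_explore_le_card_exploration_rounds)
  also have "\<dots> \<le> real N * (real (N * M * h\<^sup>2) * (K_fun z T + 1))"
    using rounds by (intro mult_left_mono) auto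
  finally show ?thesis
    by (simp add: power2_eq_square mult_ac)
qed

lemma h_fun_bounds:
  assumes "1 \<le> T" "0 \<le> \<gamma>"
  shows "1 \<le> h_fun \<gamma> T" and "real (h_fun \<gamma> T) \<le> 2 * real T powr \<gamma>"
proof -
  define x where "x = real T powr \<gamma>"
  have "1 \<le> x"
    using assms by (simp add: x_def ge_one_powr_ge_zero)
  then have "real (h_fun \<gamma> T) = of_int \<lceil>x\<rceil>"
    by (simp add: h_fun_def x_def)
  moreover have "of_int \<lceil>x\<rceil> - 1 < x" "x \<le> of_int \<lceil>x\<rceil>"
    using ceiling_correct by blast+
  ultimately have "1 \<le> real (h_fun \<gamma> T)" "real (h_fun \<gamma> T) \<le> 2 * x"
    using \<open>1 \<le> x\<close> by linarith+
  then show "1 \<le> h_fun \<gamma> T" and "real (h_fun \<gamma> T) \<le> 2 * real T powr \<gamma>"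
    by (simp_all add: x_def)
qed

lemma grid_exploration_bound:
  assumes "1 \<le> T" "0 \<le> \<gamma>"
  shows "real ((h_fun \<gamma> T)\<^sup>2) * (K_fun z T + 1)
           \<le> 4 * (real T powr (z + 2 * \<gamma>) * ln (real T) + real T powr (2 * \<gamma>))"
proof -
  have "real ((h_fun \<gamma> T)\<^sup>2) \<le> (2 * real T powr \<gamma>)\<^sup>2"
    unfolding of_nat_power using h_fun_bounds[OF assms] by (intro power_mono) auto
  also have "\<dots> = 4 * real T powr (2 * \<gamma>)"
    by (simp add: power2_eq_square flip: powr_add)
  finally have "real ((h_fun \<gamma> T)\<^sup>2) * (K_fun z T + 1) \<le> 4 * real T powr (2 * \<gamma>) * (K_fun z T + 1)"
    by (intro mult_right_mono) (simp_all add: K_fun_nonneg add_nonneg_nonneg)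
  also have "\<dots> = 4 * (real T powr (z + 2 * \<gamma>) * ln (real T) + real T powr (2 * \<gamma>))"
    by (simp add: K_fun_def powr_add algebra_simps)
  finally show ?thesis .
qed

lemma one_le_divide_c_min:
  assumes "1 \<le> N" "1 \<le> T" and pos: "\<And>n t. 0 < c n (y n t)"
    and le: "\<And>n t. n \<in> {1..N} \<Longrightarrow> c n (y n t) \<le> B"
  shows "1 \<le> B / c_min N T c y"
proof -
  have image_eq: "{c n (y n t) | n t. n \<in> {1..N} \<and> t \<in> {1..T}} = (\<lambda>(n, t). c n (y n t)) ` ({1..N} \<times> {1..T})"
    by force
  have "c_min N T c y \<in> (\<lambda>(n, t). c n (y n t)) ` ({1..N} \<times> {1..T})"
    unfolding c_min_def image_eq using assms by (intro Min_in) auto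
  then obtain n t where "n \<in> {1..N}" "c_min N T c y = c n (y n t)"
    by auto
  then show ?thesis
    using pos le by simp
qed

lemma (in prob_space) expectation_le_const:
  fixes f :: "'a \<Rightarrow> real"
  assumes "\<And>x. x \<in> space M \<Longrightarrow> f x \<le> c" and "0 \<le> c"
  shows "expectation f \<le> c"
  using integral_mono'[of M "\<lambda>_. c" f] assms by (simp add: prob_space)

theorem lemma1:
  fixes N M T :: nat and B z \<gamma> :: real
    and Nav :: "nat \<Rightarrow> nat \<Rightarrow> nat set"
    and c :: "nat \<Rightarrow> real \<Rightarrow> real" and y :: "nat \<Rightarrow> nat \<Rightarrow> real"
    and \<phi> :: "nat \<Rightarrow> nat \<Rightarrow> nat \<Rightarrow> real \<times> real"
    and p :: "nat \<Rightarrow> nat \<Rightarrow> real \<times> real \<Rightarrow> real"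
    and P :: "'w measure"
    and X :: "nat \<Rightarrow> nat \<Rightarrow> nat \<Rightarrow> 'w \<Rightarrow> bool"
    and s :: "nat \<Rightarrow> 'w \<Rightarrow> nat \<Rightarrow> nat set"
    and sopt :: "nat \<Rightarrow> nat \<Rightarrow> nat set"
  assumes N: "N \<ge> 1" and M: "M \<ge> 1" and T: "T \<ge> 1" and B: "B > 0"
    and z: "0 < z" "z < 1" and gam: "0 < \<gamma>" "\<gamma> < 1/2"
    and Nav: "\<forall>t m. Nav t m \<subseteq> {1..N}"
    and c_mono: "\<forall>n. mono (c n)"
    and c_pos: "\<forall>n t. c n (y n t) > 0"
    and c_le_B: "\<forall>n\<in>{1..N}. \<forall>t. c n (y n t) \<le> B"
    and ctx: "\<forall>t n m. \<phi> t n m \<in> {0..1} \<times> {0..1}"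
    and p_range: "\<forall>n m x. p n m x \<in> {0..1}"
    and P: "prob_space P"
    and X_rv: "\<forall>t n m. X t n m \<in> measurable P (count_space UNIV)"
    and X_bern: "\<forall>t\<ge>1. \<forall>m\<in>{1..M}. \<forall>n\<in>Nav t m.
                   measure P {\<omega>\<in>space P. X t n m \<omega>} = p n m (\<phi> t n m)"
    and X_indep: "prob_space.indep_vars P (\<lambda>_. count_space UNIV) (\<lambda>(t, n, m). X t n m)
                   {(t, n, m). 1 \<le> t \<and> m \<in> {1..M} \<and> n \<in> Nav t m}"
    and opt_decision: "\<forall>t\<in>{1..T}. feasible M (Nav t) (\<lambda>n. c n (y n t)) B (sopt t) \<and>
                   (\<forall>s'. feasible M (Nav t) (\<lambda>n. c n (y n t)) B s' \<longrightarrow>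
                      util M s' (\<lambda>n m. p n m (\<phi> t n m)) \<le> util M (sopt t) (\<lambda>n m. p n m (\<phi> t n m)))"
    and s_meas: "\<forall>t\<in>{1..T}. s t \<in> measurable P (count_space UNIV)"
    and cocs: "\<forall>t\<in>{1..T}. \<forall>\<omega>\<in>space P.
                 cocs_choice M (Nav t) (\<lambda>n. c n (y n t)) B
                   (\<lambda>n m. under_explored z (h_fun \<gamma> T) Nav \<phi> s \<omega> t n m)
                   (\<lambda>n m. phat (h_fun \<gamma> T) \<phi> s X \<omega> t n m (cell (h_fun \<gamma> T) (\<phi> t n m)))
                   (s t \<omega>)"
  shows "prob_space.expectation P (R_explore z (h_fun \<gamma> T) M Nav \<phi> s sopt X T)
           \<le> 4 * real N ^ 2 * real M * B / c_min N T c y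
              * (real T powr (z + 2 * \<gamma>) * ln (real T) + real T powr (2 * \<gamma>))"
proof -
  interpret P: prob_space P by (rule P)
  define h where "h = h_fun \<gamma> T"
  define Q where "Q = real T powr (z + 2 * \<gamma>) * ln (real T) + real T powr (2 * \<gamma>)"
  have h: "1 \<le> h" and Q: "real (h\<^sup>2) * (K_fun z T + 1) \<le> 4 * Q"
    using h_fun_bounds[OF T] grid_exploration_bound[OF T] gam by (simp_all add: h_def Q_def)
  have sopt: "sopt t m \<subseteq> {1..N}" if "t \<in> {1..T}" "m \<in> {1..M}" for t m
    using opt_decision Nav that unfolding feasible_def by blast
  have regret_bound: "R_explore z h M Nav \<phi> s sopt X T \<omega> \<le> 4 * real N ^ 2 * real M * Q"
    if "\<omega> \<in> space P" for \<omega>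
  proof -
    have "R_explore z h M Nav \<phi> s sopt X T \<omega> \<le> real N ^ 2 * real M * real (h\<^sup>2) * (K_fun z T + 1)"
      using z h B Nav c_le_B sopt cocs \<open>\<omega> \<in> space P\<close>
      by (intro R_explore_le[where B = B and cst = "\<lambda>t n. c n (y n t)"
            and Xh = "\<lambda>t n m. phat h \<phi> s X \<omega> t n m (cell h (\<phi> t n m))"]) (auto simp: h_def)
    also have "\<dots> \<le> real N ^ 2 * real M * (4 * Q)"
      using mult_left_mono[OF Q, of "real N ^ 2 * real M"] by (simp add: mult.assoc)
    finally show ?thesis
      by (simp add: mult_ac)
  qed
  have "0 \<le> Q"
    using T by (simp add: Q_def)
  have "1 \<le> B / c_min N T c y"
    using one_le_divide_c_min N T c_pos c_le_B by blast
  have "P.expectation (R_explore z h M Nav \<phi> s sopt X T) \<le> 4 * real N ^ 2 * real M * Q"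
    using regret_bound \<open>0 \<le> Q\<close> by (intro P.expectation_le_const) auto
  also have "\<dots> \<le> 4 * real N ^ 2 * real M * B / c_min N T c y * Q"
    using mult_left_mono[OF \<open>1 \<le> B / c_min N T c y\<close>, of "4 * real N ^ 2 * real M * Q"] \<open>0 \<le> Q\<close>
    by (simp add: mult_ac)
  finally show ?thesis
    by (simp add: h_def Q_def)
qed

end
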